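(* Let $G=(V,E,w)$ be an undirected graph with positive real edge weights, $s\in V$, $f\ge1$ an integer, and let $T$, $w'$, $H$ be as in the context. Let $F\subseteq E$ with $|F|\le f$, let $t\in V$ be reachable from $s$ in $G-F$, let $\pi$ be a shortest path from $s$ to $t$ in $G-F$ and $N$ the set of new edges of $\pi$. Let $M$ be a minimum spanning forest of $H-F$ with respect to $w'$, let $\pi'$ be the unique path from $s$ to $t$ in $M$, and let $N'$ be the set of new edges of $\pi'$. Then for every $e'\in N'$, $w'(e')\le \max_{e\in N} w'(e)$.
   Context: For a subgraph $X$ of $G$, $d_X(u,u')$ is the distance between $u,u'$ in $X$ with respect to $w$, and $d_X(u)=d_X(s,u)$. $T$ is a shortest-path tree of $G$ rooted at $s$. Define $w'(u,v)=0$ if $(u,v)\in E(T)$ and $w'(u,v)=d_T(u)+w(u,v)+d_T(v)$ otherwise; $G'=(V,E,w')$. Set $G_0=G'$; for $i=0,\dots,f$ let $M_i$ be the edge set of a minimum spanning forest of $G_i$ with respect to $w'$ and $G_{i+1}=G_i$ minus the edges of $M_i$. $H$ is the spanning subgraph of $G$ with edge set $\bigcup_{i=0}^f M_i$. $X-F$ denotes $X$ with the edges of $F$ removed. An edge is called new (with respect to $F$) if its endpoints lie in different connected components of the forest $T-F$. *)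

theory Defs
  imports Complex_Main
begin

text \<open>Undirected simple graphs: edges are two-element vertex sets; an edge set X
  determines the subgraph (V, X). Paths are lists of distinct vertices.\<close>

definition is_walk :: "'a set set \<Rightarrow> 'a list \<Rightarrow> bool" where
  "is_walk X p \<longleftrightarrow> p \<noteq> [] \<and> (\<forall>i < length p - 1. {p ! i, p ! Suc i} \<in> X)"

definition is_path :: "'a set set \<Rightarrow> 'a list \<Rightarrow> 'a \<Rightarrow> 'a \<Rightarrow> bool" where
  "is_path X p u v \<longleftrightarrow> is_walk X p \<and> distinct p \<and> hd p = u \<and> last p = v"

definition connected_in :: "'a set set \<Rightarrow> 'a \<Rightarrow> 'a \<Rightarrow> bool" where
  "connected_in X u v \<longleftrightarrow> (\<exists>p. is_path X p u v)"

definition path_edges :: "'a list \<Rightarrow> 'a set set" where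
  "path_edges p = {{p ! i, p ! Suc i} | i. i < length p - 1}"

definition path_weight :: "('a set \<Rightarrow> real) \<Rightarrow> 'a list \<Rightarrow> real" where
  "path_weight w p = (\<Sum>i < length p - 1. w {p ! i, p ! Suc i})"

definition dist_in :: "'a set set \<Rightarrow> ('a set \<Rightarrow> real) \<Rightarrow> 'a \<Rightarrow> 'a \<Rightarrow> real" where
  "dist_in X w u v = Inf (path_weight w ` {p. is_path X p u v})"

definition forest :: "'a set set \<Rightarrow> bool" where
  "forest X \<longleftrightarrow> (\<forall>e\<in>X. \<forall>u v. e = {u, v} \<longrightarrow> \<not> connected_in (X - {e}) u v)"

definition sp_tree :: "'a set set \<Rightarrow> ('a set \<Rightarrow> real) \<Rightarrow> 'a \<Rightarrow> 'a set set \<Rightarrow> bool" where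
  "sp_tree E w s T \<longleftrightarrow> T \<subseteq> E \<and> forest T \<and> (\<forall>e\<in>T. \<forall>x\<in>e. connected_in T s x) \<and>
     (\<forall>v. connected_in E s v \<longrightarrow> connected_in T s v \<and> dist_in T w s v = dist_in E w s v)"

definition wprime :: "'a set set \<Rightarrow> ('a set \<Rightarrow> real) \<Rightarrow> 'a \<Rightarrow> 'a set \<Rightarrow> real" where
  "wprime T w s e = (if e \<in> T then 0 else (\<Sum>x\<in>e. dist_in T w s x) + w e)"

definition spanning_forest :: "'a set set \<Rightarrow> 'a set set \<Rightarrow> bool" where
  "spanning_forest X M \<longleftrightarrow> M \<subseteq> X \<and> forest M \<and> (\<forall>u v. connected_in X u v \<longrightarrow> connected_in M u v)"

definition min_spanning_forest :: "'a set set \<Rightarrow> ('a set \<Rightarrow> real) \<Rightarrow> 'a set set \<Rightarrow> bool" where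
  "min_spanning_forest X c M \<longleftrightarrow> spanning_forest X M \<and>
     (\<forall>M'. spanning_forest X M' \<longrightarrow> sum c M \<le> sum c M')"

definition new_edges :: "'a set set \<Rightarrow> 'a set set \<Rightarrow> 'a list \<Rightarrow> 'a set set" where
  "new_edges T F p = {e \<in> path_edges p. \<forall>u v. e = {u, v} \<longrightarrow> \<not> connected_in (T - F) u v}"

end

theory Submission
  imports Defs
begin

text \<open>
  Let \<open>W\<close> bound the \<open>w'\<close>-weight of the new edges of \<open>\<pi>\<close>. Every edge \<open>{u, v}\<close> of \<open>G - F\<close> is
  bridged in \<open>H - F\<close> by a \<open>u\<close>--\<open>v\<close> path of edges no heavier than it: the forests
  \<open>M\<^sub>0, \<dots>, M\<^sub>f\<close> are edge-disjoint, so by pigeonhole the path given by the cycle property in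
  one of them avoids \<open>F\<close>. Old edges of \<open>\<pi>\<close> join vertices of one component of \<open>T - F\<close>, whose
  edges have weight 0, so \<open>s\<close> and \<open>t\<close> are joined in \<open>H - F\<close> by edges of weight at most \<open>W\<close>.
  Removing an edge of \<open>\<pi>'\<close> separates \<open>s\<close> from \<open>t\<close> in the forest \<open>M\<close>, so by the cut property
  its weight is at most \<open>W\<close>. A new edge of \<open>\<pi>'\<close> is not a tree edge and hence has positive
  weight, which forces \<open>\<pi>\<close> to have new edges and \<open>W\<close> to be attained by one of them.
\<close>

abbreviation adj :: "'a set set \<Rightarrow> 'a \<Rightarrow> 'a \<Rightarrow> bool" where
  "adj X a b \<equiv> {a, b} \<in> X"

lemma adj_rtranclp_sym: "(adj X)\<^sup>*\<^sup>* u v \<Longrightarrow> (adj X)\<^sup>*\<^sup>* v u"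
  by (rule sympD[OF symp_rtranclp]) (auto intro: sympI simp: insert_commute)

lemma adj_rtranclp_doubleton: "{p, q} = {a, b} \<Longrightarrow> (adj X)\<^sup>*\<^sup>* a b \<Longrightarrow> (adj X)\<^sup>*\<^sup>* p q"
  by (auto simp: doubleton_eq_iff intro: adj_rtranclp_sym)

lemma adj_rtranclp_lift:
  assumes "(adj A)\<^sup>*\<^sup>* u v" and "\<And>p q. {p, q} \<in> A \<Longrightarrow> (adj B)\<^sup>*\<^sup>* p q"
  shows "(adj B)\<^sup>*\<^sup>* u v"
  using assms(1) by induction (auto intro: rtranclp_trans assms(2))

lemma adj_rtranclp_mono: "(adj A)\<^sup>*\<^sup>* u v \<Longrightarrow> A \<subseteq> B \<Longrightarrow> (adj B)\<^sup>*\<^sup>* u v"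
  by (erule adj_rtranclp_lift) auto

lemma adj_rtranclp_insertE:
  assumes "(adj (insert {a, b} X))\<^sup>*\<^sup>* x y"
  obtains "(adj X)\<^sup>*\<^sup>* x y"
    | "(adj X)\<^sup>*\<^sup>* x a" "(adj X)\<^sup>*\<^sup>* b y"
    | "(adj X)\<^sup>*\<^sup>* x b" "(adj X)\<^sup>*\<^sup>* a y"
proof -
  let ?R = "(adj X)\<^sup>*\<^sup>*"
  have "?R x y \<or> ?R x a \<and> ?R b y \<or> ?R x b \<and> ?R a y"
    using assms
  proof induction
    case (step y z)
    show ?case
    proof (cases "{y, z} = {a, b}")
      case True
      then have "y = a \<and> z = b \<or> y = b \<and> z = a" by (auto simp: doubleton_eq_iff)
      with step.IH show ?thesis by auto
    next
      case False
      with step.hyps(2) have "?R y z" by auto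
      with step.IH show ?thesis by (meson rtranclp_trans)
    qed
  qed simp
  with that show thesis by blast
qed

lemma rtranclp_exit_step:
  assumes "r\<^sup>*\<^sup>* x y" "P x" "\<not> P y"
  obtains a b where "r a b" "P a" "\<not> P b"
proof -
  have "\<exists>a b. r a b \<and> P a \<and> \<not> P b"
    using assms by induction blast+
  with that show thesis by blast
qed

lemma adj_rtranclp_segment:
  assumes "a \<le> b" "b < length p" "\<And>i. a \<le> i \<Longrightarrow> i < b \<Longrightarrow> {p ! i, p ! Suc i} \<in> X"
  shows "(adj X)\<^sup>*\<^sup>* (p ! a) (p ! b)"
  using assms by (induction b) (auto simp: le_Suc_eq intro: rtranclp.rtrancl_into_rtrancl)

lemma path_edges_finite: "finite (path_edges p)"
proof -
  have "path_edges p = (\<lambda>i. {p ! i, p ! Suc i}) ` {..<length p - 1}"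
    unfolding path_edges_def by auto
  then show ?thesis by simp
qed

lemma path_edges_subset: "is_walk X p \<Longrightarrow> path_edges p \<subseteq> X"
  by (auto simp: is_walk_def path_edges_def)

lemma path_edge_subset_set: "e \<in> path_edges p \<Longrightarrow> e \<subseteq> set p"
  by (auto simp: path_edges_def)

lemma path_rtranclp_vertex:
  assumes "is_path X p u v" "x \<in> set p"
  shows "(adj (path_edges p))\<^sup>*\<^sup>* u x"
proof -
  obtain k where k: "k < length p" "p ! k = x" using assms(2) by (meson in_set_conv_nth)
  have "(adj (path_edges p))\<^sup>*\<^sup>* (p ! 0) (p ! k)"
    by (rule adj_rtranclp_segment) (use k in \<open>auto simp: path_edges_def\<close>)
  moreover have "p ! 0 = u" using assms(1) by (auto simp: is_path_def is_walk_def hd_conv_nth)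
  ultimately show ?thesis using k by simp
qed

lemma path_rtranclp: "is_path X p u v \<Longrightarrow> (adj (path_edges p))\<^sup>*\<^sup>* u v"
  by (rule path_rtranclp_vertex) (auto simp: is_path_def is_walk_def)

lemma rtranclp_path:
  assumes "(adj X)\<^sup>*\<^sup>* u v"
  obtains p where "is_path X p u v"
proof -
  have "\<exists>p. is_path X p u v"
    using assms
  proof induction
    case base
    have "is_path X [u] u u" by (simp add: is_path_def is_walk_def)
    then show ?case by blast
  next
    case (step y z)
    then obtain p where p: "is_path X p u y" by blast
    then have ne: "p \<noteq> []" and wk: "\<forall>i < length p - 1. {p ! i, p ! Suc i} \<in> X"
      and d: "distinct p" and h: "hd p = u" and l: "last p = y"
      by (auto simp: is_path_def is_walk_def)
    show ?case
    proof (cases "z \<in> set p")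
      case True
      then obtain i where i: "i < length p" "p ! i = z" by (meson in_set_conv_nth)
      have "last (take (Suc i) p) = z"
        using i by (subst last_conv_nth) (auto simp: min_def intro: arg_cong[where f="(!) p"])
      then have "is_path X (take (Suc i) p) u z"
        using ne wk d h i by (auto simp: is_path_def is_walk_def)
      then show ?thesis by blast
    next
      case False
      have "{(p @ [z]) ! i, (p @ [z]) ! Suc i} \<in> X" if "i < length p" for i
      proof (cases "Suc i < length p")
        case True
        with wk show ?thesis by (simp add: nth_append)
      next
        case False
        with that have "i = length p - 1" by simp
        with ne l step.hyps(2) show ?thesis by (simp add: nth_append last_conv_nth)
      qed
      then have "is_path X (p @ [z]) u z" using ne d h False by (simp add: is_path_def is_walk_def)
      then show ?thesis by blast
    qed
  qed
  with that show thesis by blast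
qed

lemma connected_in_iff_rtranclp: "connected_in X u v \<longleftrightarrow> (adj X)\<^sup>*\<^sup>* u v"
  unfolding connected_in_def
  by (metis adj_rtranclp_mono is_path_def path_edges_subset path_rtranclp rtranclp_path)

lemma forest_subset:
  assumes "forest X" "Y \<subseteq> X"
  shows "forest Y"
  unfolding forest_def connected_in_iff_rtranclp
proof (intro ballI allI impI notI)
  fix e u v
  assume e: "e \<in> Y" "e = {u, v}" and "(adj (Y - {e}))\<^sup>*\<^sup>* u v"
  from this(3) have "(adj (X - {e}))\<^sup>*\<^sup>* u v" by (rule adj_rtranclp_mono) (use assms(2) in auto)
  with assms e show False unfolding forest_def connected_in_iff_rtranclp by blast
qed

lemma forest_insert_edge:
  assumes "forest X" "\<not> (adj X)\<^sup>*\<^sup>* x y"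
  shows "forest (insert {x, y} X)"
  unfolding forest_def connected_in_iff_rtranclp
proof (intro ballI allI impI notI)
  fix h u v
  assume h: "h \<in> insert {x, y} X" "h = {u, v}"
    and uv: "(adj (insert {x, y} X - {h}))\<^sup>*\<^sup>* u v"
  show False
  proof (cases "h = {x, y}")
    case True
    have "{x, y} \<notin> X" using assms(2) r_into_rtranclp[of "adj X" x y] by blast
    with True uv have uvX: "(adj X)\<^sup>*\<^sup>* u v" by simp
    from True h(2) have "{x, y} = {u, v}" by simp
    then have "(adj X)\<^sup>*\<^sup>* x y" using uvX by (rule adj_rtranclp_doubleton)
    with assms(2) show False by contradiction
  next
    case False
    then have hX: "h \<in> X" using h(1) by simp
    have X_h: "insert {x, y} X - {h} = insert {x, y} (X - {h})" using False by auto
    have sep: "\<not> (adj (X - {h}))\<^sup>*\<^sup>* u v"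
      using assms(1) hX h(2) unfolding forest_def connected_in_iff_rtranclp by blast
    have uvX: "(adj X)\<^sup>*\<^sup>* u v" using hX h(2) by (intro r_into_rtranclp) simp
    have lift: "(adj (X - {h}))\<^sup>*\<^sup>* a b \<Longrightarrow> (adj X)\<^sup>*\<^sup>* a b" for a b
      by (erule adj_rtranclp_mono) auto
    from uv have "(adj (insert {x, y} (X - {h})))\<^sup>*\<^sup>* u v" by (simp add: X_h)
    then show False
    proof (cases rule: adj_rtranclp_insertE)
      case 1
      with sep show False by contradiction
    next
      case 2
      have "(adj X)\<^sup>*\<^sup>* x v"
        using adj_rtranclp_sym[OF lift[OF 2(1)]] uvX by (rule rtranclp_trans)
      then have "(adj X)\<^sup>*\<^sup>* x y"
        using adj_rtranclp_sym[OF lift[OF 2(2)]] by (rule rtranclp_trans)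
      with assms(2) show False by contradiction
    next
      case 3
      have "(adj X)\<^sup>*\<^sup>* x u"
        using lift[OF 3(2)] adj_rtranclp_sym[OF uvX] by (rule rtranclp_trans)
      then have "(adj X)\<^sup>*\<^sup>* x y" using lift[OF 3(1)] by (rule rtranclp_trans)
      with assms(2) show False by contradiction
    qed
  qed
qed

lemma forest_path_edge_separates:
  assumes "forest M" "is_path M p u v" "g \<in> path_edges p"
  shows "\<not> (adj (M - {g}))\<^sup>*\<^sup>* u v"
proof
  let ?R = "(adj (M - {g}))\<^sup>*\<^sup>*"
  assume uv: "?R u v"
  obtain j where j: "j < length p - 1" "g = {p ! j, p ! Suc j}"
    using assms(3) unfolding path_edges_def by blast
  have wk: "\<And>i. i < length p - 1 \<Longrightarrow> {p ! i, p ! Suc i} \<in> M" and d: "distinct p"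
    and u: "p ! 0 = u" and v: "p ! (length p - 1) = v"
    using assms(2) by (auto simp: is_path_def is_walk_def hd_conv_nth last_conv_nth)
  have other: "{p ! i, p ! Suc i} \<in> M - {g}" if "i < length p - 1" "i \<noteq> j" for i
  proof -
    have "{p ! i, p ! Suc i} \<noteq> g"
      using d that j by (auto simp: doubleton_eq_iff nth_eq_iff_index_eq)
    with wk that(1) show ?thesis by simp
  qed
  have "?R (p ! j) (p ! 0)"
    by (rule adj_rtranclp_sym, rule adj_rtranclp_segment) (use j other in auto)
  also have "?R (p ! 0) (p ! (length p - 1))" using uv u v by simp
  also have "?R (p ! (length p - 1)) (p ! Suc j)"
    by (rule adj_rtranclp_sym, rule adj_rtranclp_segment) (use j other in auto)
  finally have "?R (p ! j) (p ! Suc j)" .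
  moreover have "g \<in> M" using wk j by simp
  ultimately show False
    using assms(1) j(2) unfolding forest_def connected_in_iff_rtranclp by blast
qed

lemma spanning_forest_exchange:
  assumes "spanning_forest X M" "{a, b} \<in> M" "{x, y} \<in> X"
    and "\<not> (adj (M - {{a, b}}))\<^sup>*\<^sup>* x y"
  shows "spanning_forest X (insert {x, y} (M - {{a, b}}))"
proof -
  let ?M' = "insert {x, y} (M - {{a, b}})"
  have MX: "M \<subseteq> X" and fM: "forest M" and spM: "\<And>u v. (adj X)\<^sup>*\<^sup>* u v \<Longrightarrow> (adj M)\<^sup>*\<^sup>* u v"
    using assms(1) by (auto simp: spanning_forest_def connected_in_iff_rtranclp)
  have lift: "(adj (M - {{a, b}}))\<^sup>*\<^sup>* u v \<Longrightarrow> (adj ?M')\<^sup>*\<^sup>* u v" for u v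
    by (erule adj_rtranclp_mono) auto
  have ab: "(adj ?M')\<^sup>*\<^sup>* a b"
  proof -
    have xy: "(adj ?M')\<^sup>*\<^sup>* x y" by (intro r_into_rtranclp) simp
    have "(adj (insert {a, b} (M - {{a, b}})))\<^sup>*\<^sup>* x y"
      using spM[of x y] assms(2,3) by (simp add: insert_absorb r_into_rtranclp)
    then show ?thesis
    proof (cases rule: adj_rtranclp_insertE)
      case 1
      with assms(4) show ?thesis by simp
    next
      case 2
      have "(adj ?M')\<^sup>*\<^sup>* a y"
        using lift[OF adj_rtranclp_sym[OF 2(1)]] xy by (rule rtranclp_trans)
      then show ?thesis using lift[OF adj_rtranclp_sym[OF 2(2)]] by (rule rtranclp_trans)
    next
      case 3
      have "(adj ?M')\<^sup>*\<^sup>* a x"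
        using lift[OF 3(2)] adj_rtranclp_sym[OF xy] by (rule rtranclp_trans)
      then show ?thesis using lift[OF 3(1)] by (rule rtranclp_trans)
    qed
  qed
  show ?thesis
    unfolding spanning_forest_def connected_in_iff_rtranclp
  proof (intro conjI allI impI)
    show "?M' \<subseteq> X" using MX assms(3) by auto
    show "forest ?M'"
      by (rule forest_insert_edge[OF forest_subset[OF fM] assms(4)]) auto
    fix u v
    assume "(adj X)\<^sup>*\<^sup>* u v"
    from spM[OF this] show "(adj ?M')\<^sup>*\<^sup>* u v"
    proof (rule adj_rtranclp_lift)
      fix p q assume pq: "{p, q} \<in> M"
      show "(adj ?M')\<^sup>*\<^sup>* p q"
      proof (cases "{p, q} = {a, b}")
        case True
        then show ?thesis using ab by (rule adj_rtranclp_doubleton)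
      next
        case False
        with pq show ?thesis by (intro r_into_rtranclp) auto
      qed
    qed
  qed
qed

lemma min_spanning_forest_exchange_le:
  assumes "min_spanning_forest X c M" "finite X" "{a, b} \<in> M" "{x, y} \<in> X"
    and "\<not> (adj (M - {{a, b}}))\<^sup>*\<^sup>* x y"
  shows "c {a, b} \<le> c {x, y}"
proof -
  let ?M' = "insert {x, y} (M - {{a, b}})"
  have "spanning_forest X ?M'"
    using assms(1) by (intro spanning_forest_exchange[OF _ assms(3-5)]) (simp add: min_spanning_forest_def)
  then have "sum c M \<le> sum c ?M'" using assms(1) by (simp add: min_spanning_forest_def)
  moreover have finM: "finite M"
    using assms(1,2) finite_subset by (auto simp: min_spanning_forest_def spanning_forest_def)
  moreover have "{x, y} \<notin> M - {{a, b}}"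
    using assms(5) r_into_rtranclp[of "adj (M - {{a, b}})" x y] by blast
  then have "sum c ?M' = c {x, y} + sum c (M - {{a, b}})" using finM by simp
  moreover have "sum c M = c {a, b} + sum c (M - {{a, b}})" using finM assms(3) by (rule sum.remove)
  ultimately show ?thesis by linarith
qed

lemma min_spanning_forest_cut_le:
  assumes "min_spanning_forest X c M" "finite X" "{a, b} \<in> M"
    and "\<not> (adj (M - {{a, b}}))\<^sup>*\<^sup>* s t" "(adj {e \<in> X. c e \<le> W})\<^sup>*\<^sup>* s t"
  shows "c {a, b} \<le> W"
proof -
  let ?R = "(adj (M - {{a, b}}))\<^sup>*\<^sup>*"
  obtain x y where xy: "{x, y} \<in> X" "c {x, y} \<le> W" and sx: "?R s x" and sy: "\<not> ?R s y"
    by (rule rtranclp_exit_step[OF assms(5), of "?R s"]) (use assms(4) in auto)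
  have "\<not> ?R x y"
  proof
    assume "?R x y"
    with sx have "?R s y" by (rule rtranclp_trans)
    with sy show False by contradiction
  qed
  with xy(1) have "c {a, b} \<le> c {x, y}" by (rule min_spanning_forest_exchange_le[OF assms(1-3)])
  with xy(2) show ?thesis by linarith
qed

lemma min_spanning_forest_cycle_property:
  assumes "min_spanning_forest X c M" "finite X" "{u, v} \<in> X"
  shows "(adj {e \<in> M. c e \<le> c {u, v}})\<^sup>*\<^sup>* u v"
proof (rule ccontr)
  let ?R = "(adj {e \<in> M. c e \<le> c {u, v}})\<^sup>*\<^sup>*"
  assume "\<not> ?R u v"
  have "connected_in M u v"
    using assms(1,3) by (auto simp: min_spanning_forest_def spanning_forest_def connected_in_iff_rtranclp)
  then obtain p where p: "is_path M p u v" by (auto simp: connected_in_def)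
  obtain a b where ab: "{a, b} \<in> path_edges p" "?R u a" "\<not> ?R u b"
    by (rule rtranclp_exit_step[OF path_rtranclp[OF p], of "?R u"]) (use \<open>\<not> ?R u v\<close> in auto)
  have abM: "{a, b} \<in> M" using ab(1) p path_edges_subset by (auto simp: is_path_def)
  have "c {u, v} < c {a, b}"
  proof (rule ccontr)
    assume "\<not> c {u, v} < c {a, b}"
    with abM have "?R a b" by (intro r_into_rtranclp) simp
    with ab(2) have "?R u b" by (rule rtranclp_trans)
    with ab(3) show False by contradiction
  qed
  moreover have "\<not> (adj (M - {{a, b}}))\<^sup>*\<^sup>* u v"
    using assms(1) p ab(1) by (intro forest_path_edge_separates)
      (auto simp: min_spanning_forest_def spanning_forest_def)
  then have "c {a, b} \<le> c {u, v}" by (rule min_spanning_forest_exchange_le[OF assms(1,2) abM assms(3)])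
  ultimately show False by simp
qed

lemma min_spanning_forest_path_edge_le:
  assumes "min_spanning_forest X c M" "finite X" "is_path M p s t" "g \<in> path_edges p"
    and "(adj {e \<in> X. c e \<le> W})\<^sup>*\<^sup>* s t"
  shows "c g \<le> W"
proof -
  obtain a b where gab: "g = {a, b}" using assms(4) by (auto simp: path_edges_def)
  have "g \<in> M" using assms(3,4) path_edges_subset by (auto simp: is_path_def)
  moreover have "\<not> (adj (M - {g}))\<^sup>*\<^sup>* s t"
    using assms(1,3,4) by (intro forest_path_edge_separates)
      (auto simp: min_spanning_forest_def spanning_forest_def)
  ultimately show ?thesis
    unfolding gab by (rule min_spanning_forest_cut_le[OF assms(1,2) _ _ assms(5)])
qed

lemma disjoint_family_avoids:
  assumes "finite F" "card F \<le> f" "\<And>i j. i \<le> f \<Longrightarrow> j \<le> f \<Longrightarrow> i \<noteq> j \<Longrightarrow> A i \<inter> A j = {}"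
  obtains i where "i \<le> f" "A i \<inter> F = {}"
proof -
  have "\<exists>i\<le>f. A i \<inter> F = {}"
  proof (rule ccontr)
    assume "\<not> ?thesis"
    then have meets: "A i \<inter> F \<noteq> {}" if "i \<le> f" for i using that by blast
    have "card (\<Union>i\<le>f. A i \<inter> F) = (\<Sum>i\<le>f. card (A i \<inter> F))"
      using assms(1,3) by (intro card_UN_disjoint) auto
    also have "\<dots> \<ge> (\<Sum>i\<le>f. 1)"
      using meets assms(1) by (intro sum_mono) (simp add: Suc_leI card_gt_0_iff)
    finally have "Suc f \<le> card (\<Union>i\<le>f. A i \<inter> F)" by simp
    also have "\<dots> \<le> card F" using assms(1) by (intro card_mono) auto
    finally show False using assms(2) by simp
  qed
  with that show thesis by blast
qed

lemma union_min_spanning_forests_bottleneck: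
  assumes "finite E"
    and msf: "\<forall>i\<le>f. min_spanning_forest (E - (\<Union>j<i. Ms j)) c (Ms i)"
    and "finite F" "card F \<le> f" "{u, v} \<in> E - F"
  shows "(adj {e \<in> (\<Union>i\<le>f. Ms i) - F. c e \<le> c {u, v}})\<^sup>*\<^sup>* u v"
proof (cases "{u, v} \<in> (\<Union>i\<le>f. Ms i)")
  case True
  with assms(5) show ?thesis by (intro r_into_rtranclp) auto
next
  case False
  let ?L = "\<lambda>i. {e \<in> Ms i. c e \<le> c {u, v}}"
  have Ms_sub: "Ms i \<subseteq> E - (\<Union>j<i. Ms j)" if "i \<le> f" for i
    using msf that by (auto simp: min_spanning_forest_def spanning_forest_def)
  have "?L i \<inter> ?L j = {}" if "i \<le> f" "j \<le> f" "i \<noteq> j" for i j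
    using Ms_sub[OF that(1)] Ms_sub[OF that(2)] that(3) by (cases "i < j") auto
  with assms(3,4) obtain i where i: "i \<le> f" "?L i \<inter> F = {}"
    by (rule disjoint_family_avoids)
  have "(adj (?L i))\<^sup>*\<^sup>* u v"
    by (rule min_spanning_forest_cycle_property[of "E - (\<Union>j<i. Ms j)"])
      (use msf i(1) assms(1,5) False in auto)
  then show ?thesis by (rule adj_rtranclp_mono) (use i in auto)
qed

lemma new_edges_bound_connects:
  assumes "finite E" "T \<subseteq> E"
    and "\<forall>i\<le>f. min_spanning_forest (E - (\<Union>j<i. Ms j)) c (Ms i)"
    and "finite F" "card F \<le> f" "is_path (E - F) \<pi> s t"
    and "\<And>e. e \<in> T \<Longrightarrow> c e \<le> W" "\<And>e. e \<in> new_edges T F \<pi> \<Longrightarrow> c e \<le> W"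
  shows "(adj {e \<in> (\<Union>i\<le>f. Ms i) - F. c e \<le> W})\<^sup>*\<^sup>* s t"
proof -
  let ?Y = "{e \<in> (\<Union>i\<le>f. Ms i) - F. c e \<le> W}"
  have bottleneck: "(adj ?Y)\<^sup>*\<^sup>* p q" if "{p, q} \<in> E - F" "c {p, q} \<le> W" for p q
    using union_min_spanning_forests_bottleneck[OF assms(1,3-5) that(1)]
    by (rule adj_rtranclp_mono) (use that(2) in auto)
  have "(adj ?Y)\<^sup>*\<^sup>* p q" if pq: "{p, q} \<in> path_edges \<pi>" for p q
  proof (cases "{p, q} \<in> new_edges T F \<pi>")
    case True
    moreover have "{p, q} \<in> E - F" using pq assms(6) path_edges_subset by (auto simp: is_path_def)
    ultimately show ?thesis using assms(8) bottleneck by blast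
  next
    case False
    then obtain a b where ab: "{p, q} = {a, b}" "(adj (T - F))\<^sup>*\<^sup>* a b"
      using pq by (auto simp: new_edges_def connected_in_iff_rtranclp)
    have "(adj ?Y)\<^sup>*\<^sup>* a b"
      using ab(2) by (rule adj_rtranclp_lift) (use assms(2,7) bottleneck in blast)
    with ab(1) show ?thesis by (rule adj_rtranclp_doubleton)
  qed
  with path_rtranclp[OF assms(6)] show ?thesis by (rule adj_rtranclp_lift)
qed

lemma dist_in_nonneg:
  assumes "connected_in X u v" "\<And>e. e \<in> X \<Longrightarrow> 0 \<le> w e"
  shows "0 \<le> dist_in X w u v"
  unfolding dist_in_def
proof (rule cInf_greatest)
  show "path_weight w ` {p. is_path X p u v} \<noteq> {}"
    using assms(1) by (auto simp: connected_in_def)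
next
  fix r assume "r \<in> path_weight w ` {p. is_path X p u v}"
  then obtain p where "is_path X p u v" "r = path_weight w p" by blast
  then show "0 \<le> r"
    using assms(2) by (auto simp: path_weight_def is_path_def is_walk_def intro: sum_nonneg)
qed

lemma wprime_pos:
  assumes "sp_tree E w s T" "\<forall>e\<in>E. 0 < w e" "e \<in> E" "e \<notin> T"
    and "\<And>x. x \<in> e \<Longrightarrow> connected_in E s x"
  shows "0 < wprime T w s e"
proof -
  have "0 \<le> dist_in T w s x" if "x \<in> e" for x
    using assms(1,2) assms(5)[OF that]
    by (intro dist_in_nonneg) (auto simp: sp_tree_def less_imp_le)
  then have "0 \<le> (\<Sum>x\<in>e. dist_in T w s x)" by (rule sum_nonneg)
  moreover have "0 < w e" using assms(2,3) by blast
  ultimately show ?thesis using assms(4) by (simp add: wprime_def)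
qed

lemma new_edge_wprime_pos:
  assumes "sp_tree E w s T" "\<forall>e\<in>E. 0 < w e" "is_path X p s t" "X \<subseteq> E - F"
    and "g \<in> new_edges T F p"
  shows "0 < wprime T w s g"
proof (rule wprime_pos[OF assms(1,2)])
  obtain a b where gab: "g = {a, b}" and gP: "g \<in> path_edges p"
    using assms(5) by (auto simp: new_edges_def path_edges_def)
  have PX: "path_edges p \<subseteq> X" using assms(3) path_edges_subset by (auto simp: is_path_def)
  show "g \<in> E" using gP PX assms(4) by blast
  show "g \<notin> T"
  proof
    assume "g \<in> T"
    with gP PX assms(4) have "connected_in (T - F) a b"
      by (auto simp: gab connected_in_iff_rtranclp)
    with assms(5) gab show False by (auto simp: new_edges_def)
  qed
  fix x assume "x \<in> g"
  then have "(adj (path_edges p))\<^sup>*\<^sup>* s x"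
    using path_rtranclp_vertex[OF assms(3)] path_edge_subset_set[OF gP] by blast
  then show "connected_in E s x"
    unfolding connected_in_iff_rtranclp by (rule adj_rtranclp_mono) (use PX assms(4) in auto)
qed

theorem lemma3:
  fixes V :: "'a set" and E :: "'a set set" and w :: "'a set \<Rightarrow> real"
    and s t :: 'a and f :: nat and T F :: "'a set set"
    and Ms :: "nat \<Rightarrow> 'a set set" and M :: "'a set set" and \<pi> \<pi>' :: "'a list"
  assumes "finite V"
    and "E \<subseteq> {{u, v} | u v. u \<in> V \<and> v \<in> V \<and> u \<noteq> v}"
    and "\<forall>e\<in>E. w e > 0"
    and "s \<in> V"
    and "f \<ge> 1"
    and "sp_tree E w s T"
    and "\<forall>i\<le>f. min_spanning_forest (E - (\<Union>j<i. Ms j)) (wprime T w s) (Ms i)"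
    and "F \<subseteq> E" and "card F \<le> f"
    and "connected_in (E - F) s t"
    and "is_path (E - F) \<pi> s t"
    and "\<forall>p. is_path (E - F) p s t \<longrightarrow> path_weight w \<pi> \<le> path_weight w p"
    and "min_spanning_forest ((\<Union>i\<le>f. Ms i) - F) (wprime T w s) M"
    and "is_path M \<pi>' s t"
  shows "\<forall>e'\<in>new_edges T F \<pi>'. \<exists>e\<in>new_edges T F \<pi>. wprime T w s e' \<le> wprime T w s e"
proof
  fix e' assume e': "e' \<in> new_edges T F \<pi>'"
  let ?c = "wprime T w s" and ?N = "new_edges T F \<pi>" and ?X = "(\<Union>i\<le>f. Ms i) - F"
  \<comment> \<open>The 0 covers \<open>N = {}\<close>; that case is excluded at the end by positivity of \<open>w' e'\<close>.\<close>
  define W where "W = Max (insert 0 (?c ` ?N))"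
  have "E \<subseteq> Pow V" using assms(2) by auto
  then have finE: "finite E" using assms(1) by (rule finite_subset[OF _ finite_Pow_iff[THEN iffD2]])
  have finN: "finite ?N" using path_edges_finite by (rule finite_subset[rotated]) (auto simp: new_edges_def)
  have XE: "?X \<subseteq> E" using assms(7) by (auto simp: min_spanning_forest_def spanning_forest_def)
  have MX: "M \<subseteq> ?X" using assms(13) by (simp add: min_spanning_forest_def spanning_forest_def)
  have WN: "?c e \<le> W" if "e \<in> ?N" for e unfolding W_def using finN that by (intro Max_ge) auto
  have "0 \<le> W" unfolding W_def using finN by (intro Max_ge) auto
  then have WT: "?c e \<le> W" if "e \<in> T" for e using that by (simp add: wprime_def)
  have "T \<subseteq> E" using assms(6) by (simp add: sp_tree_def)
  have finX: "finite ?X" using XE finE by (rule finite_subset)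
  have e'P: "e' \<in> path_edges \<pi>'" using e' by (simp add: new_edges_def)
  have "(adj {e \<in> ?X. ?c e \<le> W})\<^sup>*\<^sup>* s t"
    by (rule new_edges_bound_connects[OF finE \<open>T \<subseteq> E\<close> assms(7) finite_subset[OF assms(8) finE]
          assms(9,11) WT WN])
  then have "?c e' \<le> W" by (rule min_spanning_forest_path_edge_le[OF assms(13) finX assms(14) e'P])
  moreover have "0 < ?c e'"
    by (rule new_edge_wprime_pos[OF assms(6,3,14) _ e']) (use MX XE in auto)
  moreover have "W \<in> insert 0 (?c ` ?N)" unfolding W_def using finN by (intro Max_in) auto
  ultimately show "\<exists>e\<in>?N. ?c e' \<le> ?c e" by auto
qed

end
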